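(* $\mathrm{Isom}_{\mathbb Z}(L)$ is equal to each of the groups $\langle (x\,y),-1\rangle\ltimes G$, $\langle (y\,z),-1\rangle\ltimes G$, $\langle (z\,x),-1\rangle\ltimes G$ (semidirect products with $G$ normal). In particular $\mathrm{Isom}_{\mathbb Z}(L)\cong(\mathbb Z_2\times\mathbb Z_2)\ltimes G$.
   Context: $\mathbb F$ is a field of characteristic zero, $\mathfrak{sl}_2$ the Lie algebra of $2\times2$ trace-zero matrices over $\mathbb F$ with trace form $(u,v)=\mathrm{tr}(uv)$. Equitable basis: $x=\begin{pmatrix}1&0\\0&-1\end{pmatrix}$, $y=\begin{pmatrix}-1&2\\0&1\end{pmatrix}$, $z=\begin{pmatrix}-1&0\\-2&1\end{pmatrix}$. Let $x^*=\begin{pmatrix}1&-1\\1&-1\end{pmatrix}$, $y^*=\begin{pmatrix}0&0\\1&0\end{pmatrix}$, $z^*=\begin{pmatrix}0&-1\\0&0\end{pmatrix}$; $G$ is the subgroup of $\mathrm{Aut}_{\mathbb F}(\mathfrak{sl}_2)$ generated by $\exp(\mathrm{ad}\,x^* ),\exp(\mathrm{ad}\,y^* ),\exp(\mathrm{ad}\,z^* )$. $L=\mathbb Zx\oplus\mathbb Zy\oplus\mathbb Zz$. An isometry is an $\mathbb F$-linear bijection of $\mathfrak{sl}_2$ preserving the trace form; $\mathrm{Isom}_{\mathbb Z}(L)$ is the group of isometries $\varphi$ with $\varphi(L)=L$. For distinct $u,v\in\{x,y,z\}$, $(u\,v)$ is the $\mathbb F$-linear map interchanging $u,v$ and fixing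 the third basis element; $-1$ is $u\mapsto -u$. *)

theory Defs
  imports "HOL-Analysis.Determinants" "HOL-Algebra.Bij" "HOL-Algebra.Generated_Groups"
    "HOL-Algebra.Coset" "HOL-Algebra.Elementary_Groups"
begin

type_synonym 'a m2 = "'a^2^2"

definition mat2 :: "'a \<Rightarrow> 'a \<Rightarrow> 'a \<Rightarrow> 'a \<Rightarrow> 'a m2" where
  "mat2 a b c d = (\<chi> i j. if i = 1 then (if j = 1 then a else b) else (if j = 1 then c else d))"

definition msc :: "'a::times \<Rightarrow> 'a m2 \<Rightarrow> 'a m2" where
  "msc c A = (\<chi> i j. c * A$i$j)"

definition sl2 :: "('a::field_char_0) m2 set" where
  "sl2 = {A. trace A = 0}"

definition trform :: "('a::field_char_0) m2 \<Rightarrow> 'a m2 \<Rightarrow> 'a" where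
  "trform u v = trace (u ** v)"

definition ex :: "('a::field_char_0) m2" where "ex = mat2 1 0 0 (-1)"
definition ey :: "('a::field_char_0) m2" where "ey = mat2 (-1) 2 0 1"
definition ez :: "('a::field_char_0) m2" where "ez = mat2 (-1) 0 (-2) 1"
definition xs :: "('a::field_char_0) m2" where "xs = mat2 1 (-1) 1 (-1)"
definition ys :: "('a::field_char_0) m2" where "ys = mat2 0 0 1 0"
definition zs :: "('a::field_char_0) m2" where "zs = mat2 0 (-1) 0 0"

text \<open>F-linear self-maps of sl_2 (elements of the Bij group are extensional on sl_2).\<close>

definition sl2_linear :: "(('a::field_char_0) m2 \<Rightarrow> 'a m2) \<Rightarrow> bool" where
  "sl2_linear f \<longleftrightarrow> (\<forall>u\<in>sl2. f u \<in> sl2) \<and>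
     (\<forall>u\<in>sl2. \<forall>v\<in>sl2. f (u + v) = f u + f v) \<and>
     (\<forall>c. \<forall>u\<in>sl2. f (msc c u) = msc c (f u))"

text \<open>The adjoint map and exp(ad u); for nilpotent u (as x*, y*, z* are) ad u is nilpotent
  with (ad u)^3 = 0, so the exponential series is the finite sum below.\<close>

definition ad :: "('a::field_char_0) m2 \<Rightarrow> 'a m2 \<Rightarrow> 'a m2" where
  "ad u v = u ** v - v ** u"

definition exp_ad :: "('a::field_char_0) m2 \<Rightarrow> 'a m2 \<Rightarrow> 'a m2" where
  "exp_ad u = (\<lambda>v\<in>sl2. (\<Sum>k<4. msc (1 / fact k) ((ad u ^^ k) v)))"

definition Ggrp :: "(('a::field_char_0) m2 \<Rightarrow> 'a m2) set" where
  "Ggrp = generate (BijGroup sl2) {exp_ad xs, exp_ad ys, exp_ad zs}"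

definition Lat :: "('a::field_char_0) m2 set" where
  "Lat = {msc (of_int a) ex + msc (of_int b) ey + msc (of_int c) ez | a b c. True}"

definition isometry :: "(('a::field_char_0) m2 \<Rightarrow> 'a m2) \<Rightarrow> bool" where
  "isometry f \<longleftrightarrow> f \<in> Bij sl2 \<and> sl2_linear f \<and>
     (\<forall>u\<in>sl2. \<forall>v\<in>sl2. trform (f u) (f v) = trform u v)"

definition IsomZ :: "(('a::field_char_0) m2 \<Rightarrow> 'a m2) set" where
  "IsomZ = {f. isometry f \<and> f ` Lat = Lat}"

definition transp :: "('a::field_char_0) m2 \<Rightarrow> 'a m2 \<Rightarrow> 'a m2 \<Rightarrow> ('a m2 \<Rightarrow> 'a m2)" where
  "transp u v w = (THE f. f \<in> extensional sl2 \<and> sl2_linear f \<and> f u = v \<and> f v = u \<and> f w = w)"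

definition negmap :: "('a::field_char_0) m2 \<Rightarrow> 'a m2" where
  "negmap = (\<lambda>u\<in>sl2. - u)"

definition Hgrp :: "('a::field_char_0) m2 \<Rightarrow> 'a m2 \<Rightarrow> 'a m2 \<Rightarrow> ('a m2 \<Rightarrow> 'a m2) set" where
  "Hgrp u v w = generate (BijGroup sl2) {transp u v w, negmap}"

definition int_semidirect :: "(('a::field_char_0) m2 \<Rightarrow> 'a m2) set \<Rightarrow> _ \<Rightarrow> _ \<Rightarrow> bool" where
  "int_semidirect K H N \<longleftrightarrow>
     subgroup K (BijGroup sl2) \<and> subgroup H (BijGroup sl2) \<and>
     N \<lhd> (BijGroup sl2)\<lparr>carrier := K\<rparr> \<and> H \<subseteq> K \<and>
     H \<inter> N = {\<one>\<^bsub>BijGroup sl2\<^esub>} \<and> K = H <#>\<^bsub>BijGroup sl2\<^esub> N"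

end

theory Submission
  imports Defs "HOL-Algebra.Zassenhaus"
begin

(* Writing elements of sl_2 in coordinates with respect to the equitable basis x, y, z,
   the trace form becomes the Gram form with (u,u) = 2 and (u,v) = -2 for u \<noteq> v, L becomes Z^3, and
   every element of Isom_Z(L) is given by an integer 3x3 matrix preserving this form.  The group
   Isom_Z(L) is then identified with the group generated by -1, (x y), (y z) and the three
   generators exp(ad x* ), exp(ad y* ), exp(ad z* ) of G, by a reflection descent: the image of the
   norm -6 vector (1,1,1) is moved by the reflections in x, y, z (products of the generators) into the
   fundamental chamber, where only (1,1,1) itself remains, and an isometry fixing (1,1,1) permutes
   x, y, z.  A general group-theoretic criterion (first section) then yields the semidirect product:
   conjugation by -1, (x y), (y z) maps the generators of G to generators of G or their inverses, every
   generator lies in H G, and H meets G trivially because elements of G have determinant 1 and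
   preserve the upper half of the light cone.  Finally H = {1, T, -1, -T} is isomorphic to Z_2 x Z_2. *)

section \<open>Internal semidirect products from generators\<close>

lemma (in group) conj_generate_closed:
  assumes A: "A \<subseteq> carrier G" and t: "t \<in> carrier G"
    and conj: "\<And>a. a \<in> A \<Longrightarrow> t \<otimes> a \<otimes> inv t \<in> generate G A"
  shows "g \<in> generate G A \<Longrightarrow> t \<otimes> g \<otimes> inv t \<in> generate G A"
proof (induction g rule: generate.induct)
  case one
  then show ?case using t by (simp add: generate.one)
next
  case (incl a)
  then show ?case by (rule conj)
next
  case (inv a)
  have "a \<in> carrier G" using inv A by auto
  then have "t \<otimes> inv a \<otimes> inv t = inv (t \<otimes> a \<otimes> inv t)"
    using t by (simp add: inv_mult_group m_assoc)
  then show ?case using generate_m_inv_closed[OF A conj[OF inv]] by simp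
next
  case (eng g1 g2)
  have "g1 \<in> carrier G" "g2 \<in> carrier G" using eng generate_in_carrier[OF A] by auto
  then have "t \<otimes> (g1 \<otimes> g2) \<otimes> inv t = (t \<otimes> g1 \<otimes> inv t) \<otimes> (t \<otimes> g2 \<otimes> inv t)"
    using t by (simp add: m_assoc inv_solve_left)
  then show ?case using generate.eng[OF eng.IH] by simp
qed

lemma (in group) generate_normalizes:
  assumes B: "B \<subseteq> carrier G" and N: "subgroup N G"
    and normalizes: "\<And>b n. b \<in> B \<Longrightarrow> n \<in> N \<Longrightarrow>
      b \<otimes> n \<otimes> inv b \<in> N \<and> inv b \<otimes> n \<otimes> b \<in> N"
  shows "k \<in> generate G B \<Longrightarrow> n \<in> N \<Longrightarrow> k \<otimes> n \<otimes> inv k \<in> N"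
proof (induction k arbitrary: n rule: generate.induct)
  case one
  then show ?case using subgroup.mem_carrier[OF N] by simp
next
  case (incl b)
  then show ?case using normalizes by blast
next
  case (inv b)
  then show ?case using normalizes B by auto
next
  case (eng k1 k2)
  have "k1 \<in> carrier G" "k2 \<in> carrier G" "n \<in> carrier G"
    using eng generate_in_carrier[OF B] subgroup.mem_carrier[OF N] by auto
  then have "k1 \<otimes> k2 \<otimes> n \<otimes> inv (k1 \<otimes> k2) = k1 \<otimes> (k2 \<otimes> n \<otimes> inv k2) \<otimes> inv k1"
    by (simp add: m_assoc inv_mult_group)
  then show ?case using eng by simp
qed

lemma (in group) semidirect_of_generators:
  assumes B: "B \<subseteq> carrier G" and H: "subgroup H G" and N: "subgroup N G"
    and HK: "H \<subseteq> generate G B" and NK: "N \<subseteq> generate G B"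
    and normalizes: "\<And>b n. b \<in> B \<Longrightarrow> n \<in> N \<Longrightarrow>
      b \<otimes> n \<otimes> inv b \<in> N \<and> inv b \<otimes> n \<otimes> b \<in> N"
    and gens_split: "B \<subseteq> H <#> N"
  shows "N \<lhd> G\<lparr>carrier := generate G B\<rparr>" and "generate G B = H <#> N"
proof -
  let ?K = "generate G B"
  have K: "subgroup ?K G" by (rule generate_is_subgroup[OF B])
  then have GK: "group (G\<lparr>carrier := ?K\<rparr>)" by (rule subgroup_imp_group)
  show normal: "N \<lhd> G\<lparr>carrier := ?K\<rparr>"
  proof (rule group.normal_invI[OF GK])
    show "subgroup N (G\<lparr>carrier := ?K\<rparr>)" by (rule subgroup_incl[OF N K NK])
    fix k n assume "k \<in> carrier (G\<lparr>carrier := ?K\<rparr>)" and "n \<in> N"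
    then show "k \<otimes>\<^bsub>G\<lparr>carrier := ?K\<rparr>\<^esub> n \<otimes>\<^bsub>G\<lparr>carrier := ?K\<rparr>\<^esub>
        inv\<^bsub>G\<lparr>carrier := ?K\<rparr>\<^esub> k \<in> N"
      using generate_normalizes[OF B N normalizes] by (simp add: m_inv_consistent[OF K])
  qed
  have "subgroup (N <#> H) (G\<lparr>carrier := ?K\<rparr>)"
    using group.mult_norm_subgroup[OF GK normal subgroup_incl[OF H K HK]] by simp
  moreover have "H <#> N = N <#> H"
    using group.commut_normal[OF GK subgroup_incl[OF H K HK] normal] by simp
  ultimately have HN: "subgroup (H <#> N) (G\<lparr>carrier := ?K\<rparr>)" by simp
  have "?K \<subseteq> H <#> N"
    by (rule generate_subgroup_incl[OF gens_split incl_subgroup[OF K HN]])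
  moreover have "H <#> N \<subseteq> ?K" using subgroup.subset[OF HN] by simp
  ultimately show "?K = H <#> N" by blast
qed

section \<open>Coordinates on sl_2 with respect to the equitable basis\<close>

lemma mat2_nth [simp]:
  "mat2 a b c d $ 1 $ 1 = a" "mat2 a b c d $ 1 $ 2 = b"
  "mat2 a b c d $ 2 $ 1 = c" "mat2 a b c d $ 2 $ 2 = d"
  by (simp_all add: mat2_def)

lemma m2_eq_iff: "(A::'a m2) = B \<longleftrightarrow> A$1$1 = B$1$1 \<and> A$1$2 = B$1$2 \<and> A$2$1 = B$2$1 \<and> A$2$2 = B$2$2"
  by (auto simp: vec_eq_iff forall_2)

lemma mat2_add [simp]: "mat2 a b c d + mat2 a' b' c' d' = mat2 (a+a') (b+b') (c+c') (d+d')"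
  by (simp add: m2_eq_iff)

lemma mat2_diff [simp]: "mat2 a b c d - mat2 a' b' c' d' = mat2 (a-a') (b-b') (c-c') (d-d')"
  by (simp add: m2_eq_iff)

lemma mat2_mult [simp]:
  "mat2 a b c d ** mat2 a' b' c' d' = mat2 (a*a'+b*c') (a*b'+b*d') (c*a'+d*c') (c*b'+d*d')"
  by (simp add: m2_eq_iff matrix_matrix_mult_def sum_2)

lemma msc_mat2 [simp]: "msc k (mat2 a b c d) = mat2 (k*a) (k*b) (k*c) (k*d)"
  by (simp add: m2_eq_iff msc_def)

lemma trace_mat2 [simp]: "trace (mat2 a b c d) = a + d"
  by (simp add: trace_def sum_2)

datatype 'b vec3 = V3 'b 'b 'b

fun sl2_of :: "'a::field_char_0 vec3 \<Rightarrow> 'a m2" where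
  "sl2_of (V3 a b c) = msc a ex + msc b ey + msc c ez"

declare sl2_of.simps [simp del]

definition coords :: "'a::field_char_0 m2 \<Rightarrow> 'a vec3" where
  "coords M = V3 (M$1$1 + M$1$2/2 - M$2$1/2) (M$1$2/2) (- M$2$1/2)"

fun vadd :: "'b::comm_ring_1 vec3 \<Rightarrow> 'b vec3 \<Rightarrow> 'b vec3" where
  "vadd (V3 a b c) (V3 a' b' c') = V3 (a+a') (b+b') (c+c')"

fun vscale :: "'b::comm_ring_1 \<Rightarrow> 'b vec3 \<Rightarrow> 'b vec3" where
  "vscale k (V3 a b c) = V3 (k*a) (k*b) (k*c)"

lemma sl2_of_mat2: "sl2_of (V3 a b c) = mat2 (a-b-c) (2*b) (-2*c) (-a+b+c)"
  by (simp add: sl2_of.simps ex_def ey_def ez_def m2_eq_iff algebra_simps)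

lemma sl2_of_in_sl2 [simp]: "sl2_of t \<in> sl2"
  by (cases t) (simp add: sl2_of_mat2 sl2_def)

lemma coords_sl2_of [simp]: "coords (sl2_of t) = t"
  by (cases t) (simp add: sl2_of_mat2 coords_def)

lemma sl2_of_coords: "X \<in> sl2 \<Longrightarrow> sl2_of (coords X) = X"
proof -
  assume "X \<in> sl2"
  then have "X$2$2 = - X$1$1" by (simp add: sl2_def trace_def sum_2 add_eq_0_iff)
  then show ?thesis by (simp add: m2_eq_iff sl2_of_mat2 coords_def field_simps)
qed

lemma sl2_of_inj [simp]: "sl2_of s = sl2_of t \<longleftrightarrow> s = t"
  by (metis coords_sl2_of)

lemma sl2_eq_range: "sl2 = range sl2_of"
  by (auto intro: sl2_of_coords[symmetric])

lemma sl2_of_vadd: "sl2_of s + sl2_of t = sl2_of (vadd s t)"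
  by (cases s; cases t) (simp add: sl2_of_mat2 algebra_simps)

lemma sl2_of_vscale: "msc k (sl2_of t) = sl2_of (vscale k t)"
  by (cases t) (simp add: sl2_of_mat2 algebra_simps)

lemma basis_sl2_of: "ex = sl2_of (V3 1 0 0)" "ey = sl2_of (V3 0 1 0)" "ez = sl2_of (V3 0 0 1)"
  by (simp_all add: sl2_of_mat2 ex_def ey_def ez_def)

fun gram :: "'b::comm_ring_1 vec3 \<Rightarrow> 'b vec3 \<Rightarrow> 'b" where
  "gram (V3 a b c) (V3 a' b' c') = 2*(a*a'+b*b'+c*c') - 2*(a*b'+b*a'+a*c'+c*a'+b*c'+c*b')"

lemma trform_sl2_of: "trform (sl2_of s) (sl2_of t) = gram s t"
  by (cases s; cases t) (simp add: trform_def sl2_of_mat2 algebra_simps)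

lemma gram_sym: "gram s t = gram t s"
  by (cases s; cases t) (simp add: algebra_simps)

fun of_int_vec :: "int vec3 \<Rightarrow> 'b::comm_ring_1 vec3" where
  "of_int_vec (V3 a b c) = V3 (of_int a) (of_int b) (of_int c)"

lemma gram_of_int_vec: "gram (of_int_vec s) (of_int_vec t) = (of_int (gram s t) :: 'b::comm_ring_1)"
  by (cases s; cases t) simp

lemma Lat_eq: "Lat = range (\<lambda>s. sl2_of (of_int_vec s))"
proof -
  have "msc (of_int a) ex + msc (of_int b) ey + msc (of_int c) ez = sl2_of (of_int_vec (V3 a b c))"
    for a b c :: int
    by (simp add: sl2_of.simps)
  then show ?thesis
    unfolding Lat_def by (auto simp del: of_int_vec.simps) (metis vec3.exhaust)
qed

text \<open>Integer 3x3 matrices (entries row by row), acting on coordinate triples.\<close>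

datatype imat3 = M3 int int int int int int int int int

fun mvec :: "imat3 \<Rightarrow> 'b::comm_ring_1 vec3 \<Rightarrow> 'b vec3" where
  "mvec (M3 a b c d e f g h i) (V3 x y z) =
     V3 (of_int a*x + of_int b*y + of_int c*z) (of_int d*x + of_int e*y + of_int f*z)
        (of_int g*x + of_int h*y + of_int i*z)"

fun mmul :: "imat3 \<Rightarrow> imat3 \<Rightarrow> imat3" where
  "mmul (M3 a b c d e f g h i) (M3 a' b' c' d' e' f' g' h' i') =
    M3 (a*a'+b*d'+c*g') (a*b'+b*e'+c*h') (a*c'+b*f'+c*i')
       (d*a'+e*d'+f*g') (d*b'+e*e'+f*h') (d*c'+e*f'+f*i')
       (g*a'+h*d'+i*g') (g*b'+h*e'+i*h') (g*c'+h*f'+i*i')"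

definition I3 :: imat3 where "I3 = M3 1 0 0 0 1 0 0 0 1"

fun cols :: "int vec3 \<Rightarrow> int vec3 \<Rightarrow> int vec3 \<Rightarrow> imat3" where
  "cols (V3 a d g) (V3 b e h) (V3 c f i) = M3 a b c d e f g h i"

lemma mvec_of_int_vec: "mvec A (of_int_vec s) = of_int_vec (mvec A s)"
  by (cases A; cases s) simp

lemma mvec_mmul: "mvec (mmul A B) s = mvec A (mvec B s)"
  by (cases A; cases B; cases s) (simp add: algebra_simps)

lemma mmul_assoc: "mmul (mmul A B) C = mmul A (mmul B C)"
  by (cases A; cases B; cases C) (simp add: algebra_simps)

lemma mmul_I3 [simp]: "mmul I3 A = A" "mmul A I3 = A"
  by (cases A; simp add: I3_def)+

lemma mvec_I3 [simp]: "mvec I3 s = s"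
  by (cases s) (simp add: I3_def)

lemma mvec_vadd: "mvec A (vadd s t) = vadd (mvec A s) (mvec A t)"
  by (cases A; cases s; cases t) (simp add: algebra_simps)

lemma mvec_vscale: "mvec A (vscale k t) = vscale k (mvec A t)"
  by (cases A; cases t) (simp add: algebra_simps)

lemma imat3_eqI:
  assumes "(mvec A (V3 1 0 0) :: 'a::field_char_0 vec3) = mvec B (V3 1 0 0)"
    and "(mvec A (V3 0 1 0) :: 'a vec3) = mvec B (V3 0 1 0)"
    and "(mvec A (V3 0 0 1) :: 'a vec3) = mvec B (V3 0 0 1)"
  shows "A = B"
  using assms by (cases A; cases B) auto

definition mat_map :: "imat3 \<Rightarrow> 'a::field_char_0 m2 \<Rightarrow> 'a m2" where
  "mat_map A = (\<lambda>X\<in>sl2. sl2_of (mvec A (coords X)))"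

lemma mat_map_sl2_of [simp]: "mat_map A (sl2_of t) = sl2_of (mvec A t)"
  by (simp add: mat_map_def)

lemma mat_map_eqI:
  assumes f_ext: "f \<in> extensional sl2" and on_coords: "\<And>t. f (sl2_of t) = sl2_of (mvec A t)"
  shows "f = mat_map A"
proof (rule ext)
  fix X :: "'a::field_char_0 m2"
  show "f X = mat_map A X"
  proof (cases "X \<in> sl2")
    case True
    then show ?thesis using on_coords[of "coords X"] by (simp add: sl2_of_coords mat_map_def)
  next
    case False
    then show ?thesis by (simp add: mat_map_def extensional_arb[OF f_ext False])
  qed
qed

lemma mat_map_inj: "(mat_map A :: 'a::field_char_0 m2 \<Rightarrow> 'a m2) = mat_map B \<longleftrightarrow> A = B"
proof
  assume "(mat_map A :: 'a m2 \<Rightarrow> 'a m2) = mat_map B"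
  then have "(sl2_of (mvec A t) :: 'a m2) = sl2_of (mvec B t)" for t
    by (metis mat_map_sl2_of)
  then have "(mvec A t :: 'a vec3) = mvec B t" for t by simp
  then show "A = B" by (intro imat3_eqI)
qed simp

lemma sl2_add: "X \<in> sl2 \<Longrightarrow> Y \<in> sl2 \<Longrightarrow> X + Y \<in> sl2"
  by (simp add: sl2_def trace_add)

lemma sl2_msc: "X \<in> sl2 \<Longrightarrow> msc k X \<in> sl2"
  by (metis sl2_of_coords sl2_of_in_sl2 sl2_of_vscale)

lemma basis_in_sl2: "ex \<in> sl2" "ey \<in> sl2" "ez \<in> sl2"
  by (simp_all add: basis_sl2_of)

lemma mat_map_linear: "sl2_linear (mat_map A :: 'a::field_char_0 m2 \<Rightarrow> 'a m2)"
proof -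
  have "mat_map A (sl2_of s + sl2_of t) = mat_map A (sl2_of s) + (mat_map A (sl2_of t) :: 'a m2)"
    and "mat_map A (msc k (sl2_of s)) = msc k (mat_map A (sl2_of s) :: 'a m2)" for s t k
    by (simp_all only: sl2_of_vadd sl2_of_vscale mat_map_sl2_of mvec_vadd mvec_vscale)
  then show ?thesis
    unfolding sl2_linear_def sl2_eq_range by (auto simp del: mat_map_sl2_of) simp
qed

lemma sl2_linear_sl2_of:
  assumes "sl2_linear f"
  shows "f (sl2_of (V3 a b c)) = msc a (f ex) + msc b (f ey) + msc c (f ez)"
  using assms unfolding sl2_of.simps sl2_linear_def by (simp add: basis_in_sl2 sl2_add sl2_msc)

lemma sl2_linear_eqI:
  assumes "sl2_linear f" "sl2_linear g" "f \<in> extensional sl2" "g \<in> extensional sl2"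
    and "f ex = g ex" "f ey = g ey" "f ez = g ez"
  shows "f = g"
proof (rule ext)
  fix X :: "'a::field_char_0 m2"
  show "f X = g X"
  proof (cases "X \<in> sl2")
    case True
    then obtain a b c where "X = sl2_of (V3 a b c)" by (metis sl2_of_coords vec3.exhaust)
    then show ?thesis using assms by (simp add: sl2_linear_sl2_of)
  next
    case False
    then show ?thesis by (simp add: extensional_arb[OF assms(3) False] extensional_arb[OF assms(4) False])
  qed
qed

lemma linear_integral_is_mat_map:
  assumes lin: "sl2_linear f" and f_ext: "f \<in> extensional sl2"
    and fx: "f ex = sl2_of (of_int_vec u)" and fy: "f ey = sl2_of (of_int_vec v)"
    and fz: "f ez = sl2_of (of_int_vec w)"
  shows "f = mat_map (cols u v w)"
proof (rule mat_map_eqI[OF f_ext])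
  fix t :: "'a::field_char_0 vec3"
  obtain a b c where t: "t = V3 a b c" by (cases t)
  have "f (sl2_of t) = msc a (f ex) + msc b (f ey) + msc c (f ez)"
    unfolding t by (rule sl2_linear_sl2_of[OF lin])
  also have "\<dots> = sl2_of (mvec (cols u v w) t)"
    by (cases u; cases v; cases w) (simp add: fx fy fz t sl2_of_mat2 algebra_simps)
  finally show "f (sl2_of t) = sl2_of (mvec (cols u v w) t)" .
qed

section \<open>Integral isometries as integer matrices\<close>

definition gram_preserving :: "imat3 \<Rightarrow> bool" where
  "gram_preserving A \<longleftrightarrow> (\<forall>s t. gram (mvec A s) (mvec A t) = (gram s t :: int))"

definition invertible3 :: "imat3 \<Rightarrow> bool" where
  "invertible3 A \<longleftrightarrow> (\<exists>B. mmul A B = I3 \<and> mmul B A = I3)"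

definition int_isometry :: "imat3 \<Rightarrow> bool" where
  "int_isometry A \<longleftrightarrow> gram_preserving A \<and> invertible3 A"

lemma gram_mvec_expand:
  fixes A :: imat3 and x y z x' y' z' :: "'b::comm_ring_1"
  defines "g \<equiv> \<lambda>s t. (of_int (gram (mvec A s) (mvec A t)) :: 'b)"
  shows "gram (mvec A (V3 x y z)) (mvec A (V3 x' y' z')) =
    x*x' * g (V3 1 0 0) (V3 1 0 0) + x*y' * g (V3 1 0 0) (V3 0 1 0) + x*z' * g (V3 1 0 0) (V3 0 0 1) +
    y*x' * g (V3 0 1 0) (V3 1 0 0) + y*y' * g (V3 0 1 0) (V3 0 1 0) + y*z' * g (V3 0 1 0) (V3 0 0 1) +
    z*x' * g (V3 0 0 1) (V3 1 0 0) + z*y' * g (V3 0 0 1) (V3 0 1 0) + z*z' * g (V3 0 0 1) (V3 0 0 1)"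
  unfolding g_def by (cases A) (simp add: algebra_simps)

lemma gram_preserving_gram:
  assumes "gram_preserving A"
  shows "gram (mvec A s) (mvec A t) = (gram s t :: 'b::comm_ring_1)"
proof -
  have basis: "gram (mvec A s) (mvec A t) = (gram s t :: int)" for s t
    using assms by (simp add: gram_preserving_def)
  obtain x y z x' y' z' where "s = V3 x y z" "t = V3 x' y' z'"
    by (cases s; cases t)
  then show ?thesis
    by (simp only:, subst gram_mvec_expand, simp only: basis) (simp add: algebra_simps)
qed

lemma gram_preserving_mmul: "gram_preserving A \<Longrightarrow> gram_preserving B \<Longrightarrow> gram_preserving (mmul A B)"
  by (simp add: gram_preserving_def mvec_mmul)

lemma invertible3_mmul: "invertible3 A \<Longrightarrow> invertible3 B \<Longrightarrow> invertible3 (mmul A B)"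
  unfolding invertible3_def by (metis mmul_I3(1) mmul_assoc)

lemma int_isometry_mmul: "int_isometry A \<Longrightarrow> int_isometry B \<Longrightarrow> int_isometry (mmul A B)"
  by (simp add: int_isometry_def gram_preserving_mmul invertible3_mmul)

lemma int_isometry_inverse:
  assumes "int_isometry A" and AB: "mmul A B = I3" and BA: "mmul B A = I3"
  shows "int_isometry B"
proof -
  have "gram (mvec B s) (mvec B t) = (gram s t :: int)" for s t
    using assms(1) gram_preserving_gram[of A "mvec B s" "mvec B t"]
    by (simp add: int_isometry_def mvec_mmul[symmetric] AB)
  then show ?thesis using AB BA by (auto simp: int_isometry_def gram_preserving_def invertible3_def)
qed

lemma int_isometry_I3: "int_isometry I3"
  by (auto simp: int_isometry_def gram_preserving_def invertible3_def)

lemma mat_map_in_extensional: "mat_map A \<in> extensional sl2"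
  by (simp add: mat_map_def)

lemma mat_map_compose: "compose sl2 (mat_map A) (mat_map B) = mat_map (mmul A B)"
  by (rule ext) (auto simp: compose_def mat_map_def mvec_mmul)

lemma mat_map_I3: "mat_map I3 = (\<lambda>X\<in>sl2. X)"
  by (rule ext) (auto simp: mat_map_def sl2_of_coords)

lemma mat_map_Bij:
  assumes "invertible3 A"
  shows "(mat_map A :: 'a::field_char_0 m2 \<Rightarrow> 'a m2) \<in> Bij sl2"
proof -
  obtain B where AB: "mmul A B = I3" and BA: "mmul B A = I3"
    using assms by (auto simp: invertible3_def)
  have "bij_betw (mat_map A :: 'a m2 \<Rightarrow> 'a m2) sl2 sl2"
  proof (rule bij_betw_byWitness[where f'="mat_map B"])
    show "\<forall>X\<in>sl2. mat_map B (mat_map A X :: 'a m2) = X" "\<forall>X\<in>sl2. mat_map A (mat_map B X :: 'a m2) = X"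
      by (auto simp: sl2_eq_range mvec_mmul[symmetric] AB BA)
    show "mat_map A ` sl2 \<subseteq> (sl2 :: 'a m2 set)" "mat_map B ` sl2 \<subseteq> (sl2 :: 'a m2 set)"
      by (auto simp: sl2_eq_range)
  qed
  then show ?thesis by (simp add: Bij_def mat_map_in_extensional)
qed

lemma int_isometry_in_IsomZ:
  assumes "int_isometry A"
  shows "(mat_map A :: 'a::field_char_0 m2 \<Rightarrow> 'a m2) \<in> IsomZ"
proof -
  obtain B where AB: "mmul A B = I3" and BA: "mmul B A = I3" and pres: "gram_preserving A"
    using assms by (auto simp: int_isometry_def invertible3_def)
  have "isometry (mat_map A :: 'a m2 \<Rightarrow> 'a m2)"
    using assms mat_map_Bij mat_map_linear
    by (auto simp: isometry_def int_isometry_def sl2_eq_range trform_sl2_of gram_preserving_gram[OF pres])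
  moreover have "mat_map A ` Lat = (Lat :: 'a m2 set)"
  proof
    show "mat_map A ` Lat \<subseteq> (Lat :: 'a m2 set)"
      by (auto simp: Lat_eq mvec_of_int_vec)
    show "(Lat :: 'a m2 set) \<subseteq> mat_map A ` Lat"
    proof
      fix X :: "'a m2" assume "X \<in> Lat"
      then obtain s where X: "X = sl2_of (of_int_vec s)" by (auto simp: Lat_eq)
      then have "X = mat_map A (sl2_of (of_int_vec (mvec B s)))"
        by (simp add: mvec_of_int_vec mvec_mmul[symmetric] AB)
      moreover have "sl2_of (of_int_vec (mvec B s)) \<in> (Lat :: 'a m2 set)" by (simp add: Lat_eq)
      ultimately show "X \<in> mat_map A ` Lat" by blast
    qed
  qed
  ultimately show ?thesis by (simp add: IsomZ_def)
qed

lemma IsomZ_is_mat_map: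
  assumes f: "(f :: 'a::field_char_0 m2 \<Rightarrow> 'a m2) \<in> IsomZ"
  obtains A where "gram_preserving A" and "f = mat_map A"
proof -
  have iso: "isometry f" and fL: "f ` Lat = Lat" using f by (auto simp: IsomZ_def)
  have "f (sl2_of (of_int_vec s)) \<in> Lat" for s
    using fL by (auto simp: Lat_eq)
  then have "\<exists>c. f (sl2_of (of_int_vec s)) = sl2_of (of_int_vec c)" for s
    by (auto simp: Lat_eq)
  then obtain col where col: "\<And>s. f (sl2_of (of_int_vec s)) = sl2_of (of_int_vec (col s))"
    by metis
  define A where "A = cols (col (V3 1 0 0)) (col (V3 0 1 0)) (col (V3 0 0 1))"
  have fA: "f = mat_map A"
    unfolding A_def using iso col[of "V3 1 0 0"] col[of "V3 0 1 0"] col[of "V3 0 0 1"]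
    by (intro linear_integral_is_mat_map) (simp_all add: isometry_def Bij_def basis_sl2_of)
  have "(of_int (gram (mvec A s) (mvec A t)) :: 'a) = of_int (gram s t)" for s t
  proof -
    have "trform (f (sl2_of (of_int_vec s))) (f (sl2_of (of_int_vec t)))
        = trform (sl2_of (of_int_vec s)) (sl2_of (of_int_vec t) :: 'a m2)"
      using iso by (simp add: isometry_def)
    then show ?thesis by (simp add: fA trform_sl2_of gram_of_int_vec mvec_of_int_vec)
  qed
  then have "gram_preserving A" by (simp add: gram_preserving_def)
  then show thesis using fA by (rule that)
qed

lemma mat_map_carrier:
  "invertible3 A \<Longrightarrow> (mat_map A :: 'a::field_char_0 m2 \<Rightarrow> 'a m2) \<in> carrier (BijGroup sl2)"
  by (simp add: BijGroup_def mat_map_Bij)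

lemma mat_map_mult:
  assumes "(mat_map A :: 'a::field_char_0 m2 \<Rightarrow> 'a m2) \<in> carrier (BijGroup sl2)"
    and "(mat_map B :: 'a m2 \<Rightarrow> 'a m2) \<in> carrier (BijGroup sl2)"
  shows "mat_map A \<otimes>\<^bsub>BijGroup sl2\<^esub> (mat_map B :: 'a m2 \<Rightarrow> 'a m2) = mat_map (mmul A B)"
  using assms by (simp add: BijGroup_def mat_map_compose)

lemma mat_map_one: "\<one>\<^bsub>BijGroup sl2\<^esub> = (mat_map I3 :: 'a::field_char_0 m2 \<Rightarrow> 'a m2)"
  by (simp add: BijGroup_def mat_map_I3)

lemma invertible3_I: "mmul A B = I3 \<Longrightarrow> mmul B A = I3 \<Longrightarrow> invertible3 A"
  by (auto simp: invertible3_def)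

lemma mat_map_inv:
  assumes AB: "mmul A B = I3" and BA: "mmul B A = I3"
  shows "inv\<^bsub>BijGroup sl2\<^esub> (mat_map A :: 'a::field_char_0 m2 \<Rightarrow> 'a m2) = mat_map B"
proof (rule group.inv_equality[OF group_BijGroup])
  have "invertible3 A" "invertible3 B" using AB BA by (auto intro: invertible3_I)
  then show "mat_map B \<otimes>\<^bsub>BijGroup sl2\<^esub> (mat_map A :: 'a m2 \<Rightarrow> 'a m2) = \<one>\<^bsub>BijGroup sl2\<^esub>"
    and "(mat_map A :: 'a m2 \<Rightarrow> 'a m2) \<in> carrier (BijGroup sl2)"
    and "(mat_map B :: 'a m2 \<Rightarrow> 'a m2) \<in> carrier (BijGroup sl2)"
    by (simp_all add: mat_map_carrier mat_map_mult mat_map_one BA)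
qed

definition int_isoms :: "('a::field_char_0 m2 \<Rightarrow> 'a m2) set" where
  "int_isoms = mat_map ` {A. int_isometry A}"

lemma int_isoms_subgroup: "subgroup (int_isoms :: ('a::field_char_0 m2 \<Rightarrow> 'a m2) set) (BijGroup sl2)"
proof (rule group.subgroupI[OF group_BijGroup])
  show "(int_isoms :: ('a m2 \<Rightarrow> 'a m2) set) \<subseteq> carrier (BijGroup sl2)"
    by (auto simp: int_isoms_def int_isometry_def intro: mat_map_carrier)
  show "(int_isoms :: ('a m2 \<Rightarrow> 'a m2) set) \<noteq> {}"
    using int_isometry_I3 by (auto simp: int_isoms_def)
next
  fix f :: "'a m2 \<Rightarrow> 'a m2"
  assume "f \<in> int_isoms"
  then obtain A B where A: "int_isometry A" and f: "f = mat_map A" and AB: "mmul A B = I3" "mmul B A = I3"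
    by (auto simp: int_isoms_def int_isometry_def invertible3_def)
  show "inv\<^bsub>BijGroup sl2\<^esub> f \<in> int_isoms"
    using int_isometry_inverse[OF A AB] by (simp add: f mat_map_inv[OF AB] int_isoms_def)
  fix g :: "'a m2 \<Rightarrow> 'a m2"
  assume "g \<in> int_isoms"
  then obtain C where C: "int_isometry C" and g: "g = mat_map C" by (auto simp: int_isoms_def)
  show "f \<otimes>\<^bsub>BijGroup sl2\<^esub> g \<in> int_isoms"
    using A C int_isometry_mmul[OF A C]
    by (simp add: f g mat_map_mult mat_map_carrier int_isometry_def int_isoms_def)
qed

lemma gram_preservingI:
  assumes "gram (mvec A (V3 1 0 0)) (mvec A (V3 1 0 0)) = (2::int)"
    and "gram (mvec A (V3 0 1 0)) (mvec A (V3 0 1 0)) = (2::int)"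
    and "gram (mvec A (V3 0 0 1)) (mvec A (V3 0 0 1)) = (2::int)"
    and "gram (mvec A (V3 1 0 0)) (mvec A (V3 0 1 0)) = (-2::int)"
    and "gram (mvec A (V3 1 0 0)) (mvec A (V3 0 0 1)) = (-2::int)"
    and "gram (mvec A (V3 0 1 0)) (mvec A (V3 0 0 1)) = (-2::int)"
  shows "gram_preserving A"
  unfolding gram_preserving_def
proof (intro allI)
  fix s t :: "int vec3"
  have sym: "gram (mvec A (V3 0 1 0)) (mvec A (V3 1 0 0)) = (-2::int)"
    "gram (mvec A (V3 0 0 1)) (mvec A (V3 1 0 0)) = (-2::int)"
    "gram (mvec A (V3 0 0 1)) (mvec A (V3 0 1 0)) = (-2::int)"
    using assms by (simp_all add: gram_sym)
  obtain x y z x' y' z' where "s = V3 x y z" "t = V3 x' y' z'"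
    by (cases s; cases t)
  then show "gram (mvec A s) (mvec A t) = gram s t"
    by (simp only:, subst gram_mvec_expand, simp only: assms sym) (simp add: algebra_simps)
qed

lemma int_isometryI:
  "gram_preserving A \<Longrightarrow> mmul A B = I3 \<Longrightarrow> mmul B A = I3 \<Longrightarrow> int_isometry A"
  by (auto simp: int_isometry_def invertible3_def)

definition "expx_mat = M3 1 0 0 2 2 (-1) 0 1 0"
definition "expy_mat = M3 0 0 1 0 1 0 (-1) 2 2"
definition "expz_mat = M3 2 (-1) 2 1 0 0 0 0 1"
definition "expx_inv_mat = M3 1 0 0 0 0 1 2 (-1) 2"
definition "expy_inv_mat = M3 2 2 (-1) 0 1 0 1 0 0"
definition "expz_inv_mat = M3 0 1 0 (-1) 2 2 0 0 1"

definition "swap_xy_mat = M3 0 1 0 1 0 0 0 0 1"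
definition "swap_yz_mat = M3 1 0 0 0 0 1 0 1 0"
definition "swap_zx_mat = M3 0 0 1 0 1 0 1 0 0"
definition "neg_mat = M3 (-1) 0 0 0 (-1) 0 0 0 (-1)"

text \<open>The reflections in the roots x, y, z, i.e. \<open>s \<mapsto> s - (s,u) u\<close>.\<close>

definition "refl_x_mat = M3 (-1) 2 2 0 1 0 0 0 1"
definition "refl_y_mat = M3 1 0 0 2 (-1) 2 0 0 1"
definition "refl_z_mat = M3 1 0 0 0 1 0 2 2 (-1)"

lemmas mat_defs = expx_mat_def expy_mat_def expz_mat_def expx_inv_mat_def expy_inv_mat_def
  expz_inv_mat_def swap_xy_mat_def swap_yz_mat_def swap_zx_mat_def neg_mat_def
  refl_x_mat_def refl_y_mat_def refl_z_mat_def I3_def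

lemma int_isometry_mats:
  shows "int_isometry expx_mat"
  and   "int_isometry expy_mat"
  and   "int_isometry expz_mat"
  and   "int_isometry expx_inv_mat"
  and   "int_isometry expy_inv_mat"
  and   "int_isometry expz_inv_mat"
  and   "int_isometry swap_xy_mat"
  and   "int_isometry swap_yz_mat"
  and   "int_isometry swap_zx_mat"
  and   "int_isometry neg_mat"
  and   "int_isometry refl_x_mat"
  and   "int_isometry refl_y_mat"
  and   "int_isometry refl_z_mat"
  apply (rule int_isometryI[OF gram_preservingI, where B = expx_inv_mat]; simp add: mat_defs)
  apply (rule int_isometryI[OF gram_preservingI, where B = expy_inv_mat]; simp add: mat_defs)
  apply (rule int_isometryI[OF gram_preservingI, where B = expz_inv_mat]; simp add: mat_defs)
  apply (rule int_isometryI[OF gram_preservingI, where B = expx_mat]; simp add: mat_defs)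
  apply (rule int_isometryI[OF gram_preservingI, where B = expy_mat]; simp add: mat_defs)
  apply (rule int_isometryI[OF gram_preservingI, where B = expz_mat]; simp add: mat_defs)
  apply (rule int_isometryI[OF gram_preservingI, where B = swap_xy_mat]; simp add: mat_defs)
  apply (rule int_isometryI[OF gram_preservingI, where B = swap_yz_mat]; simp add: mat_defs)
  apply (rule int_isometryI[OF gram_preservingI, where B = swap_zx_mat]; simp add: mat_defs)
  apply (rule int_isometryI[OF gram_preservingI, where B = neg_mat]; simp add: mat_defs)
  apply (rule int_isometryI[OF gram_preservingI, where B = refl_x_mat]; simp add: mat_defs)
  apply (rule int_isometryI[OF gram_preservingI, where B = refl_y_mat]; simp add: mat_defs)
  apply (rule int_isometryI[OF gram_preservingI, where B = refl_z_mat]; simp add: mat_defs)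
  done

lemma exp_inverses:
  "inv\<^bsub>BijGroup sl2\<^esub> (mat_map expx_mat :: 'a::field_char_0 m2 \<Rightarrow> 'a m2) = mat_map expx_inv_mat"
  "inv\<^bsub>BijGroup sl2\<^esub> (mat_map expy_mat :: 'a::field_char_0 m2 \<Rightarrow> 'a m2) = mat_map expy_inv_mat"
  "inv\<^bsub>BijGroup sl2\<^esub> (mat_map expz_mat :: 'a::field_char_0 m2 \<Rightarrow> 'a m2) = mat_map expz_inv_mat"
  by (rule mat_map_inv; simp add: mat_defs)+

lemma exp_ad_mat_map:
  assumes "\<And>a b c. (\<Sum>k<4. msc (1 / fact k) ((ad u ^^ k) (sl2_of (V3 a b c)))) = sl2_of (mvec A (V3 a b c))"
  shows "(exp_ad u :: 'a::field_char_0 m2 \<Rightarrow> 'a m2) = mat_map A"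
proof (rule mat_map_eqI)
  show "exp_ad u \<in> extensional sl2" by (simp add: exp_ad_def)
  show "exp_ad u (sl2_of t) = sl2_of (mvec A t)" for t
    using assms by (cases t) (simp add: exp_ad_def)
qed

lemma msc_zero: "msc k (0 :: 'a::field_char_0 m2) = 0"
  by (simp add: msc_def vec_eq_iff)

lemma sum_lessThan_4: "(\<Sum>k<4::nat. f k) = f 0 + f 1 + f 2 + f 3"
  by (simp add: eval_nat_numeral)

lemma exp_ad_mats:
  "(exp_ad xs :: 'a::field_char_0 m2 \<Rightarrow> 'a m2) = mat_map expx_mat"
  "(exp_ad ys :: 'a::field_char_0 m2 \<Rightarrow> 'a m2) = mat_map expy_mat"
  "(exp_ad zs :: 'a::field_char_0 m2 \<Rightarrow> 'a m2) = mat_map expz_mat"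
  by (rule exp_ad_mat_map;
      simp add: msc_zero sum_lessThan_4 ad_def xs_def ys_def zs_def sl2_of_mat2 mat_defs
        eval_nat_numeral field_simps)+

lemma negmap_mat_map: "(negmap :: 'a::field_char_0 m2 \<Rightarrow> 'a m2) = mat_map neg_mat"
proof (rule mat_map_eqI)
  show "negmap \<in> extensional sl2" by (simp add: negmap_def)
  fix t :: "'a vec3"
  have "negmap (sl2_of t) = - sl2_of t" by (simp add: negmap_def)
  also have "\<dots> = sl2_of (mvec neg_mat t)" by (cases t) (simp add: neg_mat_def sl2_of_mat2 m2_eq_iff)
  finally show "negmap (sl2_of t) = sl2_of (mvec neg_mat t)" .
qed

lemma transp_mat_map:
  assumes basis: "{u, v, w} = {ex, ey, ez}"
    and swap: "mat_map M u = v" "mat_map M v = u" "mat_map M w = (w :: 'a::field_char_0 m2)"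
  shows "transp u v w = mat_map M"
  unfolding transp_def
proof (rule the_equality)
  show "mat_map M \<in> extensional sl2 \<and> sl2_linear (mat_map M) \<and> mat_map M u = v \<and> mat_map M v = u \<and> mat_map M w = w"
    using swap by (simp add: mat_map_in_extensional mat_map_linear)
next
  fix f :: "'a m2 \<Rightarrow> 'a m2"
  assume f: "f \<in> extensional sl2 \<and> sl2_linear f \<and> f u = v \<and> f v = u \<and> f w = w"
  have "f b = mat_map M b" if "b \<in> {ex, ey, ez}" for b
    using that f swap unfolding basis[symmetric] by auto
  then show "f = mat_map M"
    using f by (intro sl2_linear_eqI) (simp_all add: mat_map_in_extensional mat_map_linear)
qed

lemma transp_mats:
  "transp ex ey ez = (mat_map swap_xy_mat :: 'a::field_char_0 m2 \<Rightarrow> 'a m2)"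
  "transp ey ez ex = (mat_map swap_yz_mat :: 'a::field_char_0 m2 \<Rightarrow> 'a m2)"
  "transp ez ex ey = (mat_map swap_zx_mat :: 'a::field_char_0 m2 \<Rightarrow> 'a m2)"
  by (rule transp_mat_map; auto simp: basis_sl2_of mat_defs)+

text \<open>A vector of negative norm has coordinates of a common sign (timelike vectors lie in one
  of the two halves of the light cone).\<close>

lemma negative_norm_same_sign:
  assumes "gram (V3 a b c) (V3 a b c) < (0::int)"
  shows "0 < a*b" "0 < b*c" "0 < a*c"
proof -
  have "4*(a*b) > (c-a-b)^2" "4*(b*c) > (a-b-c)^2" "4*(a*c) > (b-a-c)^2"
    using assms by (simp_all add: power2_eq_square algebra_simps)
  moreover have "(c-a-b)^2 \<ge> 0" "(a-b-c)^2 \<ge> 0" "(b-a-c)^2 \<ge> 0" by simp_all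
  ultimately show "0 < a*b" "0 < b*c" "0 < a*c" by linarith+
qed

lemma negative_norm_positive:
  fixes a b c :: int
  assumes "gram (V3 a b c) (V3 a b c) < 0" and "0 < b"
  shows "0 < a" "0 < c"
  using negative_norm_same_sign[OF assms(1)] assms(2) by (simp_all add: zero_less_mult_iff)

lemma nonzero_of_pair_sums:
  fixes d e f :: int
  assumes "0 \<le> e" "0 \<le> f" "2 \<le> d + e" "2 \<le> d + f" "d*e + e*f + d*f = 3"
  shows "d \<noteq> 0"
proof
  assume "d = 0"
  then have "2*2 \<le> e*f" using assms by (intro mult_mono) auto
  then show False using assms \<open>d = 0\<close> by simp
qed

text \<open>The only norm -6 vector with positive coordinates satisfying the triangle inequalities
  (the fundamental chamber of the reflections in x, y, z) is (1,1,1).\<close>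

lemma chamber_vector:
  fixes a b c :: int
  assumes norm: "gram (V3 a b c) (V3 a b c) = -6" and pos: "0 < a" "0 < b" "0 < c"
    and tri: "a \<le> b + c" "b \<le> a + c" "c \<le> a + b"
  shows "a = 1 \<and> b = 1 \<and> c = 1"
proof -
  define d e f where "d = b + c - a" and "e = a + c - b" and "f = a + b - c"
  have nonneg: "0 \<le> d" "0 \<le> e" "0 \<le> f" using tri by (simp_all add: d_def e_def f_def)
  have sums: "2 \<le> d + e" "2 \<le> e + f" "2 \<le> d + f" using pos by (simp_all add: d_def e_def f_def)
  have key: "d*e + e*f + d*f = 3"
    using norm by (simp add: d_def e_def f_def algebra_simps)
  have "d \<noteq> 0" "e \<noteq> 0" "f \<noteq> 0"
    using nonzero_of_pair_sums[of e f d] nonzero_of_pair_sums[of d f e] nonzero_of_pair_sums[of d e f]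
      nonneg sums key by (simp_all add: algebra_simps)
  then have ge1: "1 \<le> d" "1 \<le> e" "1 \<le> f" using nonneg by auto
  then have "d \<le> d*e" "e \<le> e*f" "f \<le> d*f" "1 \<le> d*e" "1 \<le> e*f" "1 \<le> d*f"
    using mult_left_mono[of 1 e d] mult_left_mono[of 1 f e] mult_right_mono[of 1 d f]
      mult_mono[of 1 d 1 e] mult_mono[of 1 e 1 f] mult_mono[of 1 d 1 f] by simp_all
  then have "d = 1" "e = 1" "f = 1" using key ge1 by linarith+
  then show ?thesis by (simp add: d_def e_def f_def)
qed

lemma norm2_unit_vector:
  fixes p q r :: int
  assumes norm: "gram (V3 p q r) (V3 p q r) = 2" and sum: "p + q + r = 1"
  shows "(p = 1 \<and> q = 0 \<and> r = 0) \<or> (p = 0 \<and> q = 1 \<and> r = 0) \<or> (p = 0 \<and> q = 0 \<and> r = 1)"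
proof -
  have "(p+q+r)^2 = 1" using sum by simp
  then have sq: "p^2 + q^2 + r^2 = 1" using norm by (simp add: power2_eq_square algebra_simps)
  then have "p^2 \<le> 1" "q^2 \<le> 1" "r^2 \<le> 1" by (smt (verit) zero_le_power2)+
  then have "\<bar>p\<bar> \<le> 1" "\<bar>q\<bar> \<le> 1" "\<bar>r\<bar> \<le> 1" by (simp_all add: abs_square_le_1)
  then have "p \<in> {-1,0,1}" "q \<in> {-1,0,1}" "r \<in> {-1,0,1}" by auto
  then show ?thesis using sum sq by auto
qed

section \<open>Isom_Z(L) is generated by -1, (x y), (y z) and the generators of G\<close>

definition isom_gens :: "('a::field_char_0 m2 \<Rightarrow> 'a m2) set" where
  "isom_gens = mat_map ` {neg_mat, swap_xy_mat, swap_yz_mat, expx_mat, expy_mat, expz_mat}"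

definition gen_isoms :: "('a::field_char_0 m2 \<Rightarrow> 'a m2) set" where
  "gen_isoms = generate (BijGroup sl2) isom_gens"

lemma isom_gens_carrier: "isom_gens \<subseteq> carrier (BijGroup (sl2 :: 'a::field_char_0 m2 set))"
  using int_isometry_mats by (auto simp: isom_gens_def int_isometry_def intro: mat_map_carrier)

lemma gen_isoms_subgroup: "subgroup (gen_isoms :: ('a::field_char_0 m2 \<Rightarrow> 'a m2) set) (BijGroup sl2)"
  unfolding gen_isoms_def by (rule group.generate_is_subgroup[OF group_BijGroup isom_gens_carrier])

lemma gen_isoms_mmul:
  assumes "(mat_map A :: 'a::field_char_0 m2 \<Rightarrow> 'a m2) \<in> gen_isoms" "(mat_map B :: 'a m2 \<Rightarrow> 'a m2) \<in> gen_isoms"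
  shows "(mat_map (mmul A B) :: 'a m2 \<Rightarrow> 'a m2) \<in> gen_isoms"
proof -
  have "(mat_map A :: 'a m2 \<Rightarrow> 'a m2) \<in> carrier (BijGroup sl2)"
    "(mat_map B :: 'a m2 \<Rightarrow> 'a m2) \<in> carrier (BijGroup sl2)"
    using assms subgroup.subset[OF gen_isoms_subgroup] by blast+
  then show ?thesis using subgroup.m_closed[OF gen_isoms_subgroup assms] by (simp add: mat_map_mult)
qed

lemma gen_isoms_mats:
  "(mat_map neg_mat :: 'a::field_char_0 m2 \<Rightarrow> 'a m2) \<in> gen_isoms"
  "(mat_map swap_xy_mat :: 'a::field_char_0 m2 \<Rightarrow> 'a m2) \<in> gen_isoms"
  "(mat_map swap_yz_mat :: 'a::field_char_0 m2 \<Rightarrow> 'a m2) \<in> gen_isoms"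
  "(mat_map expx_mat :: 'a::field_char_0 m2 \<Rightarrow> 'a m2) \<in> gen_isoms"
  "(mat_map expy_mat :: 'a::field_char_0 m2 \<Rightarrow> 'a m2) \<in> gen_isoms"
  "(mat_map expz_mat :: 'a::field_char_0 m2 \<Rightarrow> 'a m2) \<in> gen_isoms"
  by (simp_all add: gen_isoms_def isom_gens_def generate.incl)

lemma gen_isoms_more_mats:
  "(mat_map I3 :: 'a::field_char_0 m2 \<Rightarrow> 'a m2) \<in> gen_isoms"
  "(mat_map expz_inv_mat :: 'a::field_char_0 m2 \<Rightarrow> 'a m2) \<in> gen_isoms"
  "(mat_map swap_zx_mat :: 'a::field_char_0 m2 \<Rightarrow> 'a m2) \<in> gen_isoms"
  "(mat_map refl_x_mat :: 'a::field_char_0 m2 \<Rightarrow> 'a m2) \<in> gen_isoms"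
  "(mat_map refl_y_mat :: 'a::field_char_0 m2 \<Rightarrow> 'a m2) \<in> gen_isoms"
  "(mat_map refl_z_mat :: 'a::field_char_0 m2 \<Rightarrow> 'a m2) \<in> gen_isoms"
proof -
  show I: "(mat_map I3 :: 'a m2 \<Rightarrow> 'a m2) \<in> gen_isoms"
    using subgroup.one_closed[OF gen_isoms_subgroup] by (simp add: mat_map_one)
  show zi: "(mat_map expz_inv_mat :: 'a m2 \<Rightarrow> 'a m2) \<in> gen_isoms"
    using subgroup.m_inv_closed[OF gen_isoms_subgroup gen_isoms_mats(6)] by (simp add: exp_inverses)
  have prod: "swap_zx_mat = mmul swap_xy_mat (mmul swap_yz_mat swap_xy_mat)"
    "refl_x_mat = mmul swap_xy_mat expz_inv_mat" "refl_y_mat = mmul swap_xy_mat expz_mat"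
    "refl_z_mat = mmul swap_yz_mat expx_mat"
    by (simp_all add: mat_defs)
  show "(mat_map swap_zx_mat :: 'a m2 \<Rightarrow> 'a m2) \<in> gen_isoms"
    unfolding prod(1) by (intro gen_isoms_mmul gen_isoms_mats)
  show "(mat_map refl_x_mat :: 'a m2 \<Rightarrow> 'a m2) \<in> gen_isoms"
    unfolding prod(2) by (intro gen_isoms_mmul gen_isoms_mats zi)
  show "(mat_map refl_y_mat :: 'a m2 \<Rightarrow> 'a m2) \<in> gen_isoms"
    unfolding prod(3) by (intro gen_isoms_mmul gen_isoms_mats)
  show "(mat_map refl_z_mat :: 'a m2 \<Rightarrow> 'a m2) \<in> gen_isoms"
    unfolding prod(4) by (intro gen_isoms_mmul gen_isoms_mats)
qed

lemma fixing_111_is_permutation: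
  assumes pres: "gram_preserving A" and fixed: "mvec A (V3 1 1 1) = (V3 1 1 1 :: int vec3)"
  shows "A \<in> {I3, swap_xy_mat, swap_yz_mat, swap_zx_mat, mmul swap_xy_mat swap_yz_mat, mmul swap_yz_mat swap_xy_mat}"
proof -
  obtain a b c d e f g h j where A: "A = M3 a b c d e f g h j" by (cases A)
  have g: "gram (mvec A s) (mvec A t) = (gram s t :: int)" for s t
    using pres by (simp add: gram_preserving_def)
  have sums: "a + d + g = 1" "b + e + h = 1" "c + f + j = 1"
    using g[of "V3 1 0 0" "V3 1 1 1"] g[of "V3 0 1 0" "V3 1 1 1"] g[of "V3 0 0 1" "V3 1 1 1"]
    by (simp_all add: fixed) (simp_all add: A algebra_simps)
  have norms: "gram (V3 a d g) (V3 a d g) = 2" "gram (V3 b e h) (V3 b e h) = 2" "gram (V3 c f j) (V3 c f j) = 2"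
    using g[of "V3 1 0 0" "V3 1 0 0"] g[of "V3 0 1 0" "V3 0 1 0"] g[of "V3 0 0 1" "V3 0 0 1"]
    by (simp_all add: A)
  have mixed: "gram (V3 a d g) (V3 b e h) = -2" "gram (V3 a d g) (V3 c f j) = -2" "gram (V3 b e h) (V3 c f j) = -2"
    using g[of "V3 1 0 0" "V3 0 1 0"] g[of "V3 1 0 0" "V3 0 0 1"] g[of "V3 0 1 0" "V3 0 0 1"]
    by (simp_all add: A)
  show ?thesis
    using norm2_unit_vector[OF norms(1) sums(1)] norm2_unit_vector[OF norms(2) sums(2)]
      norm2_unit_vector[OF norms(3) sums(3)] mixed
    unfolding A by (elim disjE conjE; simp add: mat_defs)
qed

lemma norm_image_111:
  assumes "gram_preserving A" "mvec A (V3 1 1 1) = V3 a b c"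
  shows "gram (V3 a b c) (V3 a b c) = (-6 :: int)"
proof -
  have "gram (mvec A (V3 1 1 1)) (mvec A (V3 1 1 1)) = (gram (V3 1 1 1) (V3 1 1 1) :: int)"
    using assms(1) by (simp add: gram_preserving_def)
  then show ?thesis using assms(2) by simp
qed

lemma reflection_step:
  fixes a b c :: int
  assumes pres: "gram_preserving A" and img: "mvec A (V3 1 1 1) = V3 a b c" and "0 < b"
    and outside: "\<not> (a \<le> b + c \<and> b \<le> a + c \<and> c \<le> a + b)"
  obtains R a' b' c' where "R \<in> {refl_x_mat, refl_y_mat, refl_z_mat}"
    and "mvec (mmul R A) (V3 1 1 1) = V3 a' b' c'" and "0 < b'" and "a' + b' + c' < a + b + c"
proof -
  have norm: "gram (V3 a b c) (V3 a b c) = -6" by (rule norm_image_111[OF pres img])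
  then have "0 < a" "0 < c" using negative_norm_positive[of a b c] \<open>0 < b\<close> by simp_all
  consider "b + c < a" | "a + c < b" | "a + b < c" using outside by linarith
  then show thesis
  proof cases
    case 1
    show thesis
      by (rule that[of refl_x_mat "2*b + 2*c - a" b c]) (use 1 \<open>0 < b\<close> in \<open>simp_all add: mvec_mmul img refl_x_mat_def\<close>)
  next
    case 2
    have "gram (V3 a (2*a + 2*c - b) c) (V3 a (2*a + 2*c - b) c) = -6"
      using norm by (simp add: algebra_simps)
    then have "0 < (2*a + 2*c - b) * c" using negative_norm_same_sign(2)[of a "2*a + 2*c - b" c] by simp
    then have "0 < 2*a + 2*c - b" using \<open>0 < c\<close> by (simp add: zero_less_mult_iff)
    show thesis
      by (rule that[of refl_y_mat a "2*a + 2*c - b" c])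
        (use 2 \<open>0 < 2*a + 2*c - b\<close> in \<open>simp_all add: mvec_mmul img refl_y_mat_def\<close>)
  next
    case 3
    show thesis
      by (rule that[of refl_z_mat a b "2*a + 2*b - c"]) (use 3 \<open>0 < b\<close> in \<open>simp_all add: mvec_mmul img refl_z_mat_def\<close>)
  qed
qed

text \<open>Reflection descent: every isometry mapping (1,1,1) into the upper half of the cone is a
  product of reflections and a permutation, hence lies in the generated group.\<close>

lemma upper_isometry_generated:
  fixes a b c :: int
  assumes "gram_preserving A" "mvec A (V3 1 1 1) = V3 a b c" "0 < b"
  shows "(mat_map A :: 'a::field_char_0 m2 \<Rightarrow> 'a m2) \<in> gen_isoms"
  using assms
proof (induction "nat (a + b + c)" arbitrary: A a b c rule: less_induct)
  case less
  show ?case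
  proof (cases "a \<le> b + c \<and> b \<le> a + c \<and> c \<le> a + b")
    case True
    have norm: "gram (V3 a b c) (V3 a b c) = -6" by (rule norm_image_111[OF less.prems(1,2)])
    then have "0 < a" "0 < c" using negative_norm_positive[of a b c] \<open>0 < b\<close> by simp_all
    then have "a = 1 \<and> b = 1 \<and> c = 1" using chamber_vector[OF norm] True \<open>0 < b\<close> by simp
    then have "A \<in> {I3, swap_xy_mat, swap_yz_mat, swap_zx_mat, mmul swap_xy_mat swap_yz_mat, mmul swap_yz_mat swap_xy_mat}"
      using fixing_111_is_permutation less.prems by simp
    then show ?thesis using gen_isoms_mats gen_isoms_more_mats gen_isoms_mmul by auto
  next
    case False
    obtain R a' b' c' where R: "R \<in> {refl_x_mat, refl_y_mat, refl_z_mat}"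
      and img: "mvec (mmul R A) (V3 1 1 1) = V3 a' b' c'" and "0 < b'" and smaller: "a' + b' + c' < a + b + c"
      using reflection_step[OF less.prems False] by blast
    have RA: "gram_preserving (mmul R A)"
      using R int_isometry_mats gram_preserving_mmul[OF _ less.prems(1)] by (auto simp: int_isometry_def)
    then have "0 < a'" "0 < c'"
      using negative_norm_positive[of a' b' c'] norm_image_111[OF RA img] \<open>0 < b'\<close> by simp_all
    then have "(mat_map (mmul R A) :: 'a m2 \<Rightarrow> 'a m2) \<in> gen_isoms"
      using less.hyps[OF _ RA img \<open>0 < b'\<close>] smaller \<open>0 < b'\<close> by simp
    moreover have "mmul R R = I3" using R by (auto simp: mat_defs)
    then have "mmul R (mmul R A) = A" by (simp add: mmul_assoc[symmetric])
    ultimately show ?thesis using R gen_isoms_more_mats gen_isoms_mmul by (metis insertE empty_iff)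
  qed
qed

lemma IsomZ_subset_gen_isoms: "(IsomZ :: ('a::field_char_0 m2 \<Rightarrow> 'a m2) set) \<subseteq> gen_isoms"
proof
  fix f :: "'a m2 \<Rightarrow> 'a m2"
  assume "f \<in> IsomZ"
  then obtain A where pres: "gram_preserving A" and f: "f = mat_map A" by (rule IsomZ_is_mat_map)
  obtain a b c where img: "mvec A (V3 1 1 1) = V3 a b (c::int)" by (metis vec3.exhaust)
  have "0 < b * c" using negative_norm_same_sign(2)[of a b c] norm_image_111[OF pres img] by simp
  then consider "0 < b" | "0 < - b" by (cases "0 < b") (auto simp: zero_less_mult_iff)
  then show "f \<in> gen_isoms"
  proof cases
    case 1
    then show ?thesis using upper_isometry_generated[OF pres img] f by simp
  next
    case 2
    have "gram_preserving (mmul neg_mat A)"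
      using gram_preserving_mmul pres int_isometry_mats by (auto simp: int_isometry_def)
    moreover have "mvec (mmul neg_mat A) (V3 1 1 1) = V3 (-a) (-b) (-c)"
      by (simp add: mvec_mmul img neg_mat_def)
    ultimately have "(mat_map (mmul neg_mat A) :: 'a m2 \<Rightarrow> 'a m2) \<in> gen_isoms"
      using upper_isometry_generated 2 by blast
    then have "(mat_map (mmul neg_mat (mmul neg_mat A)) :: 'a m2 \<Rightarrow> 'a m2) \<in> gen_isoms"
      using gen_isoms_mats(1) gen_isoms_mmul by blast
    then show ?thesis by (simp add: f mmul_assoc[symmetric] neg_mat_def I3_def[symmetric])
  qed
qed

lemma IsomZ_eq:
  "(IsomZ :: ('a::field_char_0 m2 \<Rightarrow> 'a m2) set) = gen_isoms"
  "(IsomZ :: ('a::field_char_0 m2 \<Rightarrow> 'a m2) set) = int_isoms"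
proof -
  have "isom_gens \<subseteq> (int_isoms :: ('a m2 \<Rightarrow> 'a m2) set)"
    using int_isometry_mats by (auto simp: isom_gens_def int_isoms_def)
  then have "(gen_isoms :: ('a m2 \<Rightarrow> 'a m2) set) \<subseteq> int_isoms"
    unfolding gen_isoms_def by (rule group.generate_subgroup_incl[OF group_BijGroup _ int_isoms_subgroup])
  moreover have "(int_isoms :: ('a m2 \<Rightarrow> 'a m2) set) \<subseteq> IsomZ"
    by (auto simp: int_isoms_def int_isometry_in_IsomZ)
  ultimately show "(IsomZ :: ('a m2 \<Rightarrow> 'a m2) set) = gen_isoms" "(IsomZ :: ('a m2 \<Rightarrow> 'a m2) set) = int_isoms"
    using IsomZ_subset_gen_isoms by blast+
qed

lemma IsomZ_subgroup: "subgroup (IsomZ :: ('a::field_char_0 m2 \<Rightarrow> 'a m2) set) (BijGroup sl2)"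
  unfolding IsomZ_eq(1) by (rule gen_isoms_subgroup)

definition G_gens :: "('a::field_char_0 m2 \<Rightarrow> 'a m2) set" where
  "G_gens = mat_map ` {expx_mat, expy_mat, expz_mat}"

lemma Ggrp_eq: "(Ggrp :: ('a::field_char_0 m2 \<Rightarrow> 'a m2) set) = generate (BijGroup sl2) G_gens"
  by (simp add: Ggrp_def G_gens_def exp_ad_mats)

lemma G_gens_carrier: "G_gens \<subseteq> carrier (BijGroup (sl2 :: 'a::field_char_0 m2 set))"
  using int_isometry_mats by (auto simp: G_gens_def int_isometry_def intro: mat_map_carrier)

lemma Ggrp_subgroup: "subgroup (Ggrp :: ('a::field_char_0 m2 \<Rightarrow> 'a m2) set) (BijGroup sl2)"
  unfolding Ggrp_eq by (rule group.generate_is_subgroup[OF group_BijGroup G_gens_carrier])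

lemma Ggrp_subset_IsomZ: "(Ggrp :: ('a::field_char_0 m2 \<Rightarrow> 'a m2) set) \<subseteq> IsomZ"
  unfolding Ggrp_eq IsomZ_eq(1) gen_isoms_def
  by (rule group.mono_generate[OF group_BijGroup]) (auto simp: G_gens_def isom_gens_def)

lemma Ggrp_mats:
  "(mat_map A :: 'a::field_char_0 m2 \<Rightarrow> 'a m2) \<in> Ggrp"
  if "A \<in> {I3, expx_mat, expy_mat, expz_mat, expx_inv_mat, expy_inv_mat, expz_inv_mat}"
proof -
  have "(mat_map I3 :: 'a m2 \<Rightarrow> 'a m2) \<in> Ggrp"
    using subgroup.one_closed[OF Ggrp_subgroup] by (simp add: mat_map_one)
  moreover have "(mat_map A :: 'a m2 \<Rightarrow> 'a m2) \<in> Ggrp" if "A \<in> {expx_mat, expy_mat, expz_mat}" for A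
    using that by (auto simp: Ggrp_eq G_gens_def intro: generate.incl)
  moreover have "inv\<^bsub>BijGroup sl2\<^esub> (mat_map expx_mat :: 'a m2 \<Rightarrow> 'a m2) \<in> Ggrp"
    "inv\<^bsub>BijGroup sl2\<^esub> (mat_map expy_mat :: 'a m2 \<Rightarrow> 'a m2) \<in> Ggrp"
    "inv\<^bsub>BijGroup sl2\<^esub> (mat_map expz_mat :: 'a m2 \<Rightarrow> 'a m2) \<in> Ggrp"
    by (auto simp: Ggrp_eq G_gens_def intro: generate.inv)
  ultimately show ?thesis using that by (auto simp: exp_inverses)
qed

lemma Ggrp_mmul:
  assumes "(mat_map A :: 'a::field_char_0 m2 \<Rightarrow> 'a m2) \<in> Ggrp" "(mat_map B :: 'a m2 \<Rightarrow> 'a m2) \<in> Ggrp"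
  shows "(mat_map (mmul A B) :: 'a m2 \<Rightarrow> 'a m2) \<in> Ggrp"
proof -
  have "(mat_map A :: 'a m2 \<Rightarrow> 'a m2) \<in> carrier (BijGroup sl2)"
    "(mat_map B :: 'a m2 \<Rightarrow> 'a m2) \<in> carrier (BijGroup sl2)"
    using assms subgroup.subset[OF Ggrp_subgroup] by blast+
  then show ?thesis using subgroup.m_closed[OF Ggrp_subgroup assms] by (simp add: mat_map_mult)
qed

lemma conj_exp_mats:
  assumes "t \<in> {neg_mat, swap_xy_mat, swap_yz_mat}" "g \<in> {expx_mat, expy_mat, expz_mat}"
  shows "mmul (mmul t g) t \<in> {expx_mat, expy_mat, expz_mat, expx_inv_mat, expy_inv_mat, expz_inv_mat}"
  using assms by (auto simp: mat_defs)

lemma isom_gens_normalize_Ggrp: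
  assumes b: "b \<in> isom_gens" and n: "n \<in> Ggrp"
  shows "b \<otimes>\<^bsub>BijGroup sl2\<^esub> n \<otimes>\<^bsub>BijGroup sl2\<^esub> inv\<^bsub>BijGroup sl2\<^esub> b
      \<in> (Ggrp :: ('a::field_char_0 m2 \<Rightarrow> 'a m2) set)
    \<and> inv\<^bsub>BijGroup sl2\<^esub> b \<otimes>\<^bsub>BijGroup sl2\<^esub> n \<otimes>\<^bsub>BijGroup sl2\<^esub> b \<in> Ggrp"
proof (cases "b \<in> G_gens")
  case True
  then have "b \<in> Ggrp" "inv\<^bsub>BijGroup sl2\<^esub> b \<in> Ggrp"
    unfolding Ggrp_eq by (auto intro: generate.incl generate.inv)
  then show ?thesis using n subgroup.m_closed[OF Ggrp_subgroup] by blast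
next
  case False
  then obtain t where t: "t \<in> {neg_mat, swap_xy_mat, swap_yz_mat}" and bt: "b = mat_map t"
    using b by (auto simp: isom_gens_def G_gens_def)
  have tt: "mmul t t = I3" using t by (auto simp: mat_defs)
  have inv_b: "inv\<^bsub>BijGroup sl2\<^esub> b = b" unfolding bt by (rule mat_map_inv[OF tt tt])
  have b_carrier: "b \<in> carrier (BijGroup sl2)"
    using bt mat_map_carrier[OF invertible3_I[OF tt tt]] by simp
  have "b \<otimes>\<^bsub>BijGroup sl2\<^esub> g \<otimes>\<^bsub>BijGroup sl2\<^esub> inv\<^bsub>BijGroup sl2\<^esub> b
      \<in> generate (BijGroup sl2) G_gens"
    if "g \<in> G_gens" for g
  proof -
    obtain m where m: "m \<in> {expx_mat, expy_mat, expz_mat}" and g: "g = mat_map m"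
      using \<open>g \<in> G_gens\<close> by (auto simp: G_gens_def)
    have "(mat_map (mmul (mmul t m) t) :: 'a m2 \<Rightarrow> 'a m2) \<in> Ggrp"
      using conj_exp_mats[OF t m] by (intro Ggrp_mats) auto
    moreover have "(mat_map (mmul (mmul t m) t) :: 'a m2 \<Rightarrow> 'a m2)
        = b \<otimes>\<^bsub>BijGroup sl2\<^esub> g \<otimes>\<^bsub>BijGroup sl2\<^esub> b"
      using t m int_isometry_mats
      by (auto simp: bt g mat_map_mult mat_map_carrier int_isometry_def invertible3_mmul)
    ultimately show ?thesis by (simp add: inv_b Ggrp_eq)
  qed
  then have "b \<otimes>\<^bsub>BijGroup sl2\<^esub> n \<otimes>\<^bsub>BijGroup sl2\<^esub> inv\<^bsub>BijGroup sl2\<^esub> b \<in> Ggrp"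
    using group.conj_generate_closed[OF group_BijGroup G_gens_carrier b_carrier] n by (simp add: Ggrp_eq)
  then show ?thesis by (simp add: inv_b)
qed

abbreviation swap_mats :: "imat3 set" where
  "swap_mats \<equiv> {swap_xy_mat, swap_yz_mat, swap_zx_mat}"

lemma swap_mat_involution: "T \<in> swap_mats \<Longrightarrow> mmul T T = I3"
  by (auto simp: mat_defs)

definition klein :: "imat3 \<Rightarrow> imat3 set" where
  "klein T = {I3, T, neg_mat, mmul T neg_mat}"

lemma klein_int_isometry: "T \<in> swap_mats \<Longrightarrow> X \<in> klein T \<Longrightarrow> int_isometry X"
  using int_isometry_mats int_isometry_I3 by (auto simp: klein_def intro: int_isometry_mmul)

lemma klein_subset_IsomZ:
  "T \<in> swap_mats \<Longrightarrow> (mat_map ` klein T :: ('a::field_char_0 m2 \<Rightarrow> 'a m2) set) \<subseteq> IsomZ"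
  using klein_int_isometry by (auto simp: IsomZ_eq(2) int_isoms_def)

lemma klein_subgroup:
  assumes T: "T \<in> swap_mats"
  shows "subgroup (mat_map ` klein T :: ('a::field_char_0 m2 \<Rightarrow> 'a m2) set) (BijGroup sl2)"
proof (rule group.subgroupI[OF group_BijGroup])
  show "(mat_map ` klein T :: ('a m2 \<Rightarrow> 'a m2) set) \<subseteq> carrier (BijGroup sl2)"
    using klein_int_isometry[OF T] by (auto simp: int_isometry_def intro: mat_map_carrier)
  show "(mat_map ` klein T :: ('a m2 \<Rightarrow> 'a m2) set) \<noteq> {}" by (simp add: klein_def)
next
  fix f g :: "'a m2 \<Rightarrow> 'a m2"
  assume "f \<in> mat_map ` klein T" and "g \<in> mat_map ` klein T"
  then obtain X Y where X: "X \<in> klein T" "f = mat_map X" and Y: "Y \<in> klein T" "g = mat_map Y" by auto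
  have "mmul X X = I3" using X(1) T by (auto simp: klein_def mat_defs)
  then show "inv\<^bsub>BijGroup sl2\<^esub> f \<in> mat_map ` klein T" using X by (simp add: mat_map_inv)
  have "mmul X Y \<in> klein T" using X(1) Y(1) T by (auto simp: klein_def mat_defs)
  then show "f \<otimes>\<^bsub>BijGroup sl2\<^esub> g \<in> mat_map ` klein T"
    using X Y klein_int_isometry[OF T] by (simp add: mat_map_mult mat_map_carrier int_isometry_def)
qed

lemma Hgrp_eq:
  assumes T: "T \<in> swap_mats" and tr: "transp u v w = (mat_map T :: 'a::field_char_0 m2 \<Rightarrow> 'a m2)"
  shows "Hgrp u v w = (mat_map ` klein T :: ('a m2 \<Rightarrow> 'a m2) set)"
proof
  have gens: "{transp u v w, negmap} \<subseteq> (mat_map ` klein T :: ('a m2 \<Rightarrow> 'a m2) set)"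
    by (auto simp: tr negmap_mat_map klein_def)
  show "Hgrp u v w \<subseteq> (mat_map ` klein T :: ('a m2 \<Rightarrow> 'a m2) set)"
    unfolding Hgrp_def by (rule group.generate_subgroup_incl[OF group_BijGroup gens klein_subgroup[OF T]])
next
  have T_H: "(mat_map T :: 'a m2 \<Rightarrow> 'a m2) \<in> Hgrp u v w" and neg_H: "(mat_map neg_mat :: 'a m2 \<Rightarrow> 'a m2) \<in> Hgrp u v w"
    by (simp_all add: Hgrp_def tr negmap_mat_map generate.incl)
  have "(mat_map I3 :: 'a m2 \<Rightarrow> 'a m2) \<in> Hgrp u v w"
    by (simp add: Hgrp_def mat_map_one[symmetric] generate.one)
  moreover have "(mat_map (mmul T neg_mat) :: 'a m2 \<Rightarrow> 'a m2) \<in> Hgrp u v w"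
    using generate.eng[OF T_H[unfolded Hgrp_def] neg_H[unfolded Hgrp_def]] T int_isometry_mats
    by (auto simp: Hgrp_def mat_map_mult mat_map_carrier int_isometry_def)
  ultimately show "(mat_map ` klein T :: ('a m2 \<Rightarrow> 'a m2) set) \<subseteq> Hgrp u v w"
    using T_H neg_H by (auto simp: klein_def)
qed

text \<open>Every generator of Isom_Z(L) factors as an element of H times an element of G: the
  transpositions differ from T by an element of G.\<close>

lemma isom_gens_split:
  assumes T: "T \<in> swap_mats"
  shows "isom_gens \<subseteq> (mat_map ` klein T :: ('a::field_char_0 m2 \<Rightarrow> 'a m2) set) <#>\<^bsub>BijGroup sl2\<^esub> Ggrp"
proof -
  let ?H = "mat_map ` klein T :: ('a m2 \<Rightarrow> 'a m2) set"
  have factor: "mat_map (mmul X Y) \<in> ?H <#>\<^bsub>BijGroup sl2\<^esub> Ggrp"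
    if "X \<in> klein T" "(mat_map Y :: 'a m2 \<Rightarrow> 'a m2) \<in> Ggrp" "int_isometry Y" for X Y
  proof -
    have "mat_map (mmul X Y) = mat_map X \<otimes>\<^bsub>BijGroup sl2\<^esub> (mat_map Y :: 'a m2 \<Rightarrow> 'a m2)"
      using that klein_int_isometry[OF T] by (simp add: mat_map_mult mat_map_carrier int_isometry_def)
    then show ?thesis using that unfolding set_mult_def by blast
  qed
  have in_G: "(mat_map (mmul T m) :: 'a m2 \<Rightarrow> 'a m2) \<in> Ggrp" if "m \<in> {swap_xy_mat, swap_yz_mat}" for m
  proof -
    have "mmul T m \<in> {I3, mmul expx_mat expy_mat, mmul expy_inv_mat expx_inv_mat}"
      using T that by (auto simp: mat_defs)
    moreover have "(mat_map I3 :: 'a m2 \<Rightarrow> 'a m2) \<in> Ggrp"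
      "(mat_map (mmul expx_mat expy_mat) :: 'a m2 \<Rightarrow> 'a m2) \<in> Ggrp"
      "(mat_map (mmul expy_inv_mat expx_inv_mat) :: 'a m2 \<Rightarrow> 'a m2) \<in> Ggrp"
      by (intro Ggrp_mmul Ggrp_mats; simp)+
    ultimately show ?thesis by auto
  qed
  have swaps: "(mat_map m :: 'a m2 \<Rightarrow> 'a m2) \<in> ?H <#>\<^bsub>BijGroup sl2\<^esub> Ggrp"
    if "m \<in> {swap_xy_mat, swap_yz_mat}" for m
  proof -
    have "int_isometry (mmul T m)" using T that int_isometry_mats by (auto intro: int_isometry_mmul)
    moreover have "T \<in> klein T" by (simp add: klein_def)
    ultimately show ?thesis
      using factor[of T "mmul T m"] in_G[OF that] by (simp add: mmul_assoc[symmetric] swap_mat_involution[OF T])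
  qed
  have "(mat_map m :: 'a m2 \<Rightarrow> 'a m2) \<in> ?H <#>\<^bsub>BijGroup sl2\<^esub> Ggrp"
    if "m \<in> {neg_mat, expx_mat, expy_mat, expz_mat}" for m
    using that factor[of I3 m] factor[of neg_mat I3] Ggrp_mats int_isometry_mats int_isometry_I3
    by (auto simp: klein_def)
  then show ?thesis using swaps by (auto simp: isom_gens_def)
qed

section \<open>H meets G trivially\<close>

text \<open>Elements of G have determinant 1 and preserve the upper half of the light cone;
  the nontrivial elements of H violate one of these properties.\<close>

fun det3 :: "imat3 \<Rightarrow> int" where
  "det3 (M3 a b c d e f g h i) = a*(e*i - f*h) - b*(d*i - f*g) + c*(d*h - e*g)"

lemma det3_mmul: "det3 (mmul A B) = det3 A * det3 B"
  by (induct A; induct B) (simp only: mmul.simps det3.simps; algebra)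

fun ycoord :: "int vec3 \<Rightarrow> int" where
  "ycoord (V3 a b c) = b"

definition upper_timelike :: "int vec3 \<Rightarrow> bool" where
  "upper_timelike s \<longleftrightarrow> gram s s < 0 \<and> 0 < ycoord s"

definition preserves_upper :: "imat3 \<Rightarrow> bool" where
  "preserves_upper A \<longleftrightarrow> (\<forall>s. upper_timelike s \<longrightarrow> upper_timelike (mvec A s))"

lemma preserves_upper_mmul: "preserves_upper A \<Longrightarrow> preserves_upper B \<Longrightarrow> preserves_upper (mmul A B)"
  by (simp add: preserves_upper_def mvec_mmul)

lemma upper_timelikeI:
  assumes "gram (V3 p q r) (V3 p q r) < 0" and "0 < p \<or> 0 < q \<or> 0 < r"
  shows "upper_timelike (V3 p q r)"
  using negative_norm_same_sign[OF assms(1)] assms by (auto simp: upper_timelike_def zero_less_mult_iff)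

text \<open>The generators of G and their inverses preserve the upper half cone: an image of an upper
  vector has negative norm and a visibly positive coordinate.\<close>

lemma exp_mats_preserve_upper:
  assumes A: "A \<in> {expx_mat, expy_mat, expz_mat, expx_inv_mat, expy_inv_mat, expz_inv_mat}"
  shows "preserves_upper A"
  unfolding preserves_upper_def
proof (intro allI impI)
  fix s assume s: "upper_timelike s"
  obtain a b c where abc: "s = V3 a b c" by (cases s)
  have "gram (V3 a b c) (V3 a b c) < 0" "0 < b" using s by (simp_all add: abc upper_timelike_def)
  then have pos: "0 < a" "0 < b" "0 < c" using negative_norm_positive[of a b c] by simp_all
  obtain p q r where img: "mvec A s = V3 p q r" by (cases "mvec A s")
  have "gram (V3 p q r) (V3 p q r) < 0"
    using s A int_isometry_mats gram_preserving_gram[of A s s]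
    by (auto simp: img[symmetric] upper_timelike_def int_isometry_def)
  moreover have "0 < p \<or> 0 < q" using A pos img by (auto simp: abc mat_defs)
  ultimately show "upper_timelike (mvec A s)" unfolding img by (blast intro: upper_timelikeI)
qed

lemma exp_mats_special:
  assumes "A \<in> {expx_mat, expy_mat, expz_mat, expx_inv_mat, expy_inv_mat, expz_inv_mat}"
  shows "invertible3 A \<and> det3 A = 1 \<and> preserves_upper A"
proof -
  have "det3 A = 1" using assms by (auto simp: mat_defs)
  then show ?thesis using assms exp_mats_preserve_upper int_isometry_mats by (auto simp: int_isometry_def)
qed

lemma Ggrp_special:
  assumes "f \<in> (Ggrp :: ('a::field_char_0 m2 \<Rightarrow> 'a m2) set)"
  shows "\<exists>A. f = mat_map A \<and> invertible3 A \<and> det3 A = 1 \<and> preserves_upper A"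
  using assms unfolding Ggrp_eq
proof (induction f rule: generate.induct)
  case one
  have "preserves_upper I3" by (simp add: preserves_upper_def)
  then show ?case using int_isometry_I3 by (auto simp: mat_map_one int_isometry_def I3_def)
next
  case (incl g)
  then show ?case using exp_mats_special by (auto simp: G_gens_def)
next
  case (inv g)
  then show ?case using exp_mats_special by (auto simp: G_gens_def exp_inverses)
next
  case (eng g1 g2)
  then obtain A B where "g1 = mat_map A" "invertible3 A" "det3 A = 1" "preserves_upper A"
    and "g2 = mat_map B" "invertible3 B" "det3 B = 1" "preserves_upper B" by blast
  then show ?case
    by (intro exI[of _ "mmul A B"])
      (simp add: mat_map_mult mat_map_carrier invertible3_mmul det3_mmul preserves_upper_mmul)
qed

lemma klein_inter_Ggrp:
  assumes T: "T \<in> swap_mats"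
  shows "(mat_map ` klein T :: ('a::field_char_0 m2 \<Rightarrow> 'a m2) set) \<inter> Ggrp = {\<one>\<^bsub>BijGroup sl2\<^esub>}"
proof
  have "\<not> preserves_upper (mmul T neg_mat)"
  proof
    assume "preserves_upper (mmul T neg_mat)"
    moreover have "upper_timelike (V3 1 1 1)" by (simp add: upper_timelike_def)
    ultimately have "upper_timelike (mvec (mmul T neg_mat) (V3 1 1 1))"
      unfolding preserves_upper_def by blast
    moreover have "mvec (mmul T neg_mat) (V3 1 1 1) = (V3 (-1) (-1) (-1) :: int vec3)"
      using T by (auto simp: mat_defs)
    ultimately show False by (simp add: upper_timelike_def)
  qed
  moreover have "det3 T \<noteq> 1" "det3 neg_mat \<noteq> 1" using T by (auto simp: mat_defs)
  ultimately have only_I3: "X = I3" if "X \<in> klein T" "det3 X = 1" "preserves_upper X" for X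
    using that by (auto simp: klein_def)
  show "(mat_map ` klein T :: ('a m2 \<Rightarrow> 'a m2) set) \<inter> Ggrp \<subseteq> {\<one>\<^bsub>BijGroup sl2\<^esub>}"
  proof
    fix f assume f: "f \<in> (mat_map ` klein T :: ('a m2 \<Rightarrow> 'a m2) set) \<inter> Ggrp"
    then obtain X where X: "X \<in> klein T" "f = mat_map X" by auto
    obtain A where "f = mat_map A" "det3 A = 1" "preserves_upper A" using f Ggrp_special by blast
    then have "X = I3" using only_I3 X by (simp add: mat_map_inj)
    then show "f \<in> {\<one>\<^bsub>BijGroup sl2\<^esub>}" using X by (simp add: mat_map_one)
  qed
  show "{\<one>\<^bsub>BijGroup sl2\<^esub>} \<subseteq> (mat_map ` klein T :: ('a m2 \<Rightarrow> 'a m2) set) \<inter> Ggrp"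
    using subgroup.one_closed[OF Ggrp_subgroup] by (auto simp: mat_map_one klein_def)
qed

abbreviation Z2 :: "int monoid" where "Z2 \<equiv> integer_mod_group 2"

definition klein_param :: "imat3 \<Rightarrow> int \<times> int \<Rightarrow> imat3" where
  "klein_param T p = mmul (if fst p = 1 then T else I3) (if snd p = 1 then neg_mat else I3)"

lemma carrier_Z2_Z2: "carrier (Z2 \<times>\<times> Z2) = {(0,0), (0,1), (1,0), (1,1)}"
proof -
  have "{0..<int 2} = {0,1}" by auto
  then show ?thesis by (auto simp: carrier_integer_mod_group)
qed

lemma klein_iso:
  assumes T: "T \<in> swap_mats"
  shows "(BijGroup (sl2 :: 'a::field_char_0 m2 set))\<lparr>carrier := mat_map ` klein T\<rparr> \<cong> Z2 \<times>\<times> Z2"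
proof -
  let ?K = "(BijGroup (sl2 :: 'a m2 set))\<lparr>carrier := mat_map ` klein T\<rparr>"
  let ?psi = "\<lambda>p. (mat_map (klein_param T p) :: 'a m2 \<Rightarrow> 'a m2)"
  have image: "klein_param T ` carrier (Z2 \<times>\<times> Z2) = klein T"
    using T unfolding carrier_Z2_Z2 by (auto simp: klein_param_def klein_def mat_defs)
  have "inj_on (klein_param T) (carrier (Z2 \<times>\<times> Z2))"
    using T unfolding carrier_Z2_Z2 by (auto simp: inj_on_def klein_param_def mat_defs)
  then have "inj_on ?psi (carrier (Z2 \<times>\<times> Z2))" by (simp add: inj_on_def mat_map_inj)
  moreover have "?psi ` carrier (Z2 \<times>\<times> Z2) = carrier ?K"
    unfolding partial_object.simps image[symmetric] by (simp add: image_image)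
  ultimately have "bij_betw ?psi (carrier (Z2 \<times>\<times> Z2)) (carrier ?K)" by (simp add: bij_betw_def)
  moreover have "?psi \<in> hom (Z2 \<times>\<times> Z2) ?K"
  proof (rule homI)
    fix p q assume p: "p \<in> carrier (Z2 \<times>\<times> Z2)" and q: "q \<in> carrier (Z2 \<times>\<times> Z2)"
    show "?psi p \<in> carrier ?K" using p image by auto
    have NN: "mmul neg_mat neg_mat = I3" and NT: "mmul neg_mat T = mmul T neg_mat"
      using T by (auto simp: mat_defs)
    have TT: "mmul T T = I3" by (rule swap_mat_involution[OF T])
    have NNX: "mmul neg_mat (mmul neg_mat X) = X" and TTX: "mmul T (mmul T X) = X"
      and NTX: "mmul neg_mat (mmul T X) = mmul T (mmul neg_mat X)" for X
      by (simp_all add: mmul_assoc[symmetric] NN TT NT)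
    obtain a b c d where pq: "p = (a, b)" "q = (c, d)" and bits: "a \<in> {0, 1}" "b \<in> {0, 1}" "c \<in> {0, 1}" "d \<in> {0, 1}"
      using p q unfolding carrier_Z2_Z2 by auto
    have "klein_param T (p \<otimes>\<^bsub>Z2 \<times>\<times> Z2\<^esub> q) = mmul (klein_param T p) (klein_param T q)"
      using bits unfolding pq
      by (simp add: klein_param_def) (elim disjE; simp add: mmul_assoc NN NT TT NNX TTX NTX)
    moreover have "klein_param T p \<in> klein T" "klein_param T q \<in> klein T" using p q image by auto
    ultimately show "?psi (p \<otimes>\<^bsub>Z2 \<times>\<times> Z2\<^esub> q) = ?psi p \<otimes>\<^bsub>?K\<^esub> ?psi q"
      using klein_int_isometry[OF T] by (simp add: mat_map_mult mat_map_carrier int_isometry_def)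
  qed
  ultimately have "Z2 \<times>\<times> Z2 \<cong> ?K" unfolding is_iso_def iso_def by blast
  moreover have "group (Z2 \<times>\<times> Z2)" by (rule DirProd_group) simp_all
  ultimately show ?thesis by (simp add: group.iso_sym)
qed

lemma IsomZ_semidirect:
  assumes T: "T \<in> swap_mats" and tr: "transp u v w = (mat_map T :: 'a::field_char_0 m2 \<Rightarrow> 'a m2)"
  shows "int_semidirect (IsomZ :: ('a m2 \<Rightarrow> 'a m2) set) (Hgrp u v w) Ggrp"
proof -
  have gen: "generate (BijGroup sl2) isom_gens = (IsomZ :: ('a m2 \<Rightarrow> 'a m2) set)"
    by (simp add: IsomZ_eq(1) gen_isoms_def)
  have "(mat_map ` klein T :: ('a m2 \<Rightarrow> 'a m2) set) \<subseteq> generate (BijGroup sl2) isom_gens"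
    "(Ggrp :: ('a m2 \<Rightarrow> 'a m2) set) \<subseteq> generate (BijGroup sl2) isom_gens"
    using klein_subset_IsomZ[OF T] Ggrp_subset_IsomZ by (simp_all add: gen)
  note semidirect = group.semidirect_of_generators[OF group_BijGroup isom_gens_carrier
      klein_subgroup[OF T] Ggrp_subgroup this isom_gens_normalize_Ggrp isom_gens_split[OF T], unfolded gen]
  show ?thesis
    unfolding int_semidirect_def Hgrp_eq[OF T tr]
    using IsomZ_subgroup klein_subgroup[OF T] klein_subset_IsomZ[OF T] klein_inter_Ggrp[OF T] semidirect
    by blast
qed

theorem theorem5p4:
  shows "int_semidirect (IsomZ :: (('a::field_char_0) m2 \<Rightarrow> 'a m2) set) (Hgrp ex ey ez) Ggrp
       \<and> int_semidirect (IsomZ :: (('a::field_char_0) m2 \<Rightarrow> 'a m2) set) (Hgrp ey ez ex) Ggrp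
       \<and> int_semidirect (IsomZ :: (('a::field_char_0) m2 \<Rightarrow> 'a m2) set) (Hgrp ez ex ey) Ggrp
       \<and> (BijGroup (sl2 :: ('a::field_char_0) m2 set))\<lparr>carrier := Hgrp ex ey ez\<rparr>
           \<cong> DirProd (integer_mod_group 2) (integer_mod_group 2)"
  using IsomZ_semidirect[OF _ transp_mats(1)] IsomZ_semidirect[OF _ transp_mats(2)]
    IsomZ_semidirect[OF _ transp_mats(3)] klein_iso[of swap_xy_mat]
  by (simp add: Hgrp_eq[OF _ transp_mats(1)])

end
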